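(* (i) For $(t,x)$ with $0\le t<1$ and $|x|<B^*\sqrt{1-t}$, $\mathcal{L}J^*(t,x)=0$. (ii) For $(t,x)$ with $0\le t<1$ and $|x|>B^*\sqrt{1-t}$, $\mathcal{L}J^*(t,x)\le0$. Here $$J^*(t,x)=\begin{cases}(1-t)^{n+1/2}(F_{2n+1}+G_{2n+1})(x/\sqrt{1-t})\,j(B^* ), & |x|<B^*\sqrt{1-t},\\ g(t,x), & |x|\ge B^*\sqrt{1-t}.\end{cases}$$
   Context: For a function $\xi(t,x)$, $\mathcal{L}\xi=\frac{\partial\xi}{\partial t}-\frac{x}{1-t}\frac{\partial\xi}{\partial x}+\frac12\frac{\partial^2\xi}{\partial x^2}$. $n\ge0$ is an integer. $F_q(y):=\int_0^\infty u^{q-1}e^{yu-u^2/2}\,\mathrm{d}u$ and $G_q(y):=F_q(-y)$. $B^*>0$ is the unique zero of $B\mapsto(2n+1)-BF'_{2n+1}(B)/F_{2n+1}(B)$. $U(t,x)=(1-t)^{n+1/2}(B^* )^{2n+1}F_{2n+1}(x/\sqrt{1-t})/F_{2n+1}(B^* )$ if $x<B^*\sqrt{1-t}$, and $U(t,x)=x^{2n+1}$ otherwise. $g(t,x):=(U(t,x)-x^{2n+1})1_{\{x\le0\}}+(U(t,-x)+x^{2n+1})1_{\{x>0\}}$. $j(D):=\frac{1}{(F_{2n+1}+G_{2n+1})(D)}[D^{2n+1}+(B^* )^{2n+1}G_{2n+1}(D)/F_{2n+1}(B^* )]$. *)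

theory Defs
  imports "HOL-Analysis.Analysis"
begin

definition Fq :: "nat \<Rightarrow> real \<Rightarrow> real" where
  "Fq q y = integral {0..} (\<lambda>u. u ^ (q - 1) * exp (y * u - u\<^sup>2 / 2))"

definition Gq :: "nat \<Rightarrow> real \<Rightarrow> real" where
  "Gq q y = Fq q (- y)"

definition Bstar :: "nat \<Rightarrow> real" where
  "Bstar n = (THE B. B > 0 \<and>
      real (2*n+1) - B * deriv (Fq (2*n+1)) B / Fq (2*n+1) B = 0)"

definition Ufun :: "nat \<Rightarrow> real \<Rightarrow> real \<Rightarrow> real" where
  "Ufun n t x = (if x < Bstar n * sqrt (1 - t)
     then (1 - t) powr (real n + 1/2) * (Bstar n) ^ (2*n+1)
            * Fq (2*n+1) (x / sqrt (1 - t)) / Fq (2*n+1) (Bstar n)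
     else x ^ (2*n+1))"

definition gfun :: "nat \<Rightarrow> real \<Rightarrow> real \<Rightarrow> real" where
  "gfun n t x = (if x \<le> 0 then Ufun n t x - x ^ (2*n+1)
                 else Ufun n t (- x) + x ^ (2*n+1))"

definition jfun :: "nat \<Rightarrow> real \<Rightarrow> real" where
  "jfun n D = (1 / (Fq (2*n+1) D + Gq (2*n+1) D)) *
     (D ^ (2*n+1) + (Bstar n) ^ (2*n+1) * Gq (2*n+1) D / Fq (2*n+1) (Bstar n))"

definition Jstar :: "nat \<Rightarrow> real \<Rightarrow> real \<Rightarrow> real" where
  "Jstar n t x = (if \<bar>x\<bar> < Bstar n * sqrt (1 - t)
     then (1 - t) powr (real n + 1/2)
            * (Fq (2*n+1) (x / sqrt (1 - t)) + Gq (2*n+1) (x / sqrt (1 - t)))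
            * jfun n (Bstar n)
     else gfun n t x)"

definition Lop :: "(real \<Rightarrow> real \<Rightarrow> real) \<Rightarrow> real \<Rightarrow> real \<Rightarrow> real" where
  "Lop \<xi> t x = deriv (\<lambda>s. \<xi> s x) t - x / (1 - t) * deriv (\<lambda>y. \<xi> t y) x
               + 1/2 * deriv (deriv (\<lambda>y. \<xi> t y)) x"

end

theory Submission
  imports Defs
begin

text \<open>\<open>F\<^sub>q\<close> is a Gaussian moment integral, so it can be differentiated under the integral sign
  (\<open>F\<^sub>q' = F\<^sub>q\<^sub>+\<^sub>1\<close>) and integration by parts gives \<open>F\<^sub>q'' = y F\<^sub>q' + q F\<^sub>q\<close>; the same ODE
  holds for \<open>G\<^sub>q\<close>.  This ODE says precisely that \<open>(1-t)\<^bsup>q/2\<^esup> \<Phi>(x/\<surd>(1-t))\<close> is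
  \<open>\<L>\<close>-harmonic when \<open>\<Phi>\<close> solves it.  Inside the continuation region \<open>J\<^sup>*\<close> is of this form,
  hence (i); outside it differs from one by \<open>sgn x \<cdot> x\<^sup>2\<^sup>n\<^sup>+\<^sup>1\<close>, whose image under \<open>\<L>\<close>
  has the sign of \<open>n(1-t) - x\<^sup>2\<close>.  This is \<open>\<le> 0\<close> because \<open>B\<^sup>*\<^sup>2 \<ge> n + 1/2\<close>, which follows from
  the defining equation \<open>B F\<^sub>q'(B) = q F\<^sub>q(B)\<close> and the Cauchy--Schwarz inequality
  \<open>F\<^sub>q\<^sub>+\<^sub>1\<^sup>2 \<le> F\<^sub>q F\<^sub>q\<^sub>+\<^sub>2\<close>; Cauchy--Schwarz also makes \<open>B F\<^sub>q'(B)/F\<^sub>q(B)\<close> strictly increasing,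
  which is why \<open>B\<^sup>*\<close> is well defined.\<close>

section \<open>Gaussian moment integrals\<close>

definition gauss_kernel :: "nat \<Rightarrow> real \<Rightarrow> real \<Rightarrow> real" where
  "gauss_kernel k y u = u ^ k * exp (y * u - u\<^sup>2 / 2)"

lemma Fq_Suc: "Fq (Suc k) y = integral {0..} (gauss_kernel k y)"
  unfolding Fq_def gauss_kernel_def[abs_def] by simp

lemma gauss_kernel_nonneg: "u \<ge> 0 \<Longrightarrow> gauss_kernel k y u \<ge> 0"
  by (simp add: gauss_kernel_def)

lemma continuous_on_gauss_kernel: "continuous_on S (gauss_kernel k y)"
  unfolding gauss_kernel_def by (intro continuous_intros) auto

lemma gauss_kernel_le_exp:
  assumes "u \<ge> 0"
  shows "gauss_kernel k y u \<le> exp ((y + real k + 1)\<^sup>2 / 2) * exp (- 1 * u)"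
proof -
  have "u \<le> exp u" using exp_ge_add_one_self[of u] by linarith
  then have "u ^ k \<le> exp u ^ k"
    using assms by (intro power_mono) auto
  also have "\<dots> = exp (real k * u)" by (simp add: exp_of_nat_mult)
  finally have "gauss_kernel k y u \<le> exp (real k * u) * exp (y * u - u\<^sup>2 / 2)"
    unfolding gauss_kernel_def by (rule mult_right_mono) simp
  also have "\<dots> = exp ((y + real k + 1) * u - u\<^sup>2 / 2) * exp (- 1 * u)"
    by (simp add: exp_add[symmetric] algebra_simps)
  also have "\<dots> \<le> exp ((y + real k + 1)\<^sup>2 / 2) * exp (- 1 * u)"
  proof -
    have "0 \<le> (u - (y + real k + 1))\<^sup>2" by simp
    then show ?thesis by (intro mult_right_mono) (auto simp: power2_eq_square algebra_simps)
  qed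
  finally show ?thesis .
qed

lemma gauss_kernel_integrable: "gauss_kernel k y integrable_on {0..}"
proof (rule measurable_bounded_by_integrable_imp_integrable_real)
  show "gauss_kernel k y \<in> borel_measurable (lebesgue_on {0..})"
    by (intro continuous_imp_measurable_on_sets_lebesgue continuous_on_gauss_kernel) auto
  show "(\<lambda>u. exp ((y + real k + 1)\<^sup>2 / 2) * exp (- 1 * u)) integrable_on {0..}"
    by (intro integrable_on_mult_right integrable_on_exp_minus_to_infinity) auto
  show "\<bar>gauss_kernel k y u\<bar> \<le> exp ((y + real k + 1)\<^sup>2 / 2) * exp (- 1 * u)" if "u \<in> {0..}" for u
    using gauss_kernel_le_exp[of u k y] gauss_kernel_nonneg[of u k y] that by auto
qed auto

lemma gauss_kernel_absolutely_integrable: "gauss_kernel k y absolutely_integrable_on {0..}"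
  by (rule nonnegative_absolutely_integrable_1[OF gauss_kernel_integrable])
    (auto simp: gauss_kernel_nonneg)

lemma Fq_Suc_pos: "Fq (Suc k) y > 0"
proof -
  let ?c = "exp (- \<bar>y\<bar> * 2 - 2)"
  have lower: "?c \<le> gauss_kernel k y u" if "u \<in> {1..2}" for u
  proof -
    have "y * u \<ge> - \<bar>y\<bar> * 2"
    proof -
      have "\<bar>y * u\<bar> \<le> \<bar>y\<bar> * 2" using that by (simp add: abs_mult mult_left_mono)
      then show ?thesis by linarith
    qed
    moreover have "u\<^sup>2 \<le> 4"
      using that by (auto simp: power2_eq_square intro: order_trans[OF mult_mono[of u 2 u 2]])
    ultimately have "?c \<le> exp (y * u - u\<^sup>2 / 2)" by simp
    also have "\<dots> \<le> u ^ k * exp (y * u - u\<^sup>2 / 2)"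
      using that by (simp add: one_le_power)
    finally show ?thesis unfolding gauss_kernel_def .
  qed
  have "0 < integral {1..2::real} (\<lambda>_. ?c)" by simp
  also have "\<dots> \<le> integral {1..2} (gauss_kernel k y)"
    by (rule integral_le[OF _ _ lower])
      (auto intro: integrable_continuous_interval continuous_on_gauss_kernel)
  also have "\<dots> \<le> Fq (Suc k) y" unfolding Fq_Suc
    by (rule integral_subset_le) (auto intro: integrable_continuous_interval
        continuous_on_gauss_kernel gauss_kernel_integrable gauss_kernel_nonneg)
  finally show ?thesis .
qed

lemma tendsto_integral_atLeast:
  fixes g :: "real \<Rightarrow> real"
  assumes "g absolutely_integrable_on {a..}"
  shows "((\<lambda>b. integral {a..b} g) \<longlongrightarrow> integral {a..} g) at_top"
proof -
  have "((\<lambda>b. LINT x:{a..b}|lebesgue. g x) \<longlongrightarrow> (LINT x:{a..}|lebesgue. g x)) at_top"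
    by (rule tendsto_set_lebesgue_integral_at_top) (use assms in auto)
  moreover have "(LINT x:{a..}|lebesgue. g x) = integral {a..} g"
    using assms by (rule set_lebesgue_integral_eq_integral(2))
  moreover have "\<forall>\<^sub>F b in at_top. (LINT x:{a..b}|lebesgue. g x) = integral {a..b} g"
  proof (rule eventually_at_top_linorderI[of a])
    fix b assume "b \<ge> a"
    have "set_integrable lebesgue {a..b} g"
      by (rule set_integrable_subset[OF assms]) auto
    then show "(LINT x:{a..b}|lebesgue. g x) = integral {a..b} g"
      by (rule set_lebesgue_integral_eq_integral(2))
  qed
  ultimately show ?thesis by (simp add: filterlim_cong)
qed

lemma integral_atLeast_0_derivative:
  fixes h d :: "real \<Rightarrow> real"
  assumes der: "\<And>u. (h has_real_derivative d u) (at u)"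
    and int: "d absolutely_integrable_on {0..}"
    and lim: "(h \<longlongrightarrow> 0) at_top"
  shows "integral {0..} d = - h 0"
proof -
  have "\<forall>\<^sub>F b in at_top. integral {0..b} d = h b - h 0"
  proof (rule eventually_at_top_linorderI[of 0])
    fix b :: real assume "b \<ge> 0"
    have "(d has_integral (h b - h 0)) {0..b}"
      by (rule fundamental_theorem_of_calculus[OF \<open>b \<ge> 0\<close>])
        (auto simp flip: has_real_derivative_iff_has_vector_derivative
          intro: has_field_derivative_at_within der)
    then show "integral {0..b} d = h b - h 0" by (rule integral_unique)
  qed
  moreover have "((\<lambda>b. h b - h 0) \<longlongrightarrow> 0 - h 0) at_top"
    by (intro tendsto_intros lim)
  ultimately have "((\<lambda>b. integral {0..b} d) \<longlongrightarrow> - h 0) at_top"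
    by (simp add: filterlim_cong)
  with tendsto_integral_atLeast[OF int] show ?thesis
    using tendsto_unique by (metis trivial_limit_at_top_linorder)
qed

lemma Fq_2: "Fq 2 y = y * Fq 1 y + 1"
proof -
  let ?h = "\<lambda>u::real. exp (y * u - u\<^sup>2 / 2)"
  let ?d = "\<lambda>u. y * gauss_kernel 0 y u - gauss_kernel 1 y u"
  have "integral {0..} ?d = - ?h 0"
  proof (rule integral_atLeast_0_derivative)
    show "(?h has_real_derivative ?d u) (at u)" for u
      unfolding gauss_kernel_def by (auto intro!: derivative_eq_intros simp: algebra_simps)
    show "?d absolutely_integrable_on {0..}"
      by (intro set_integral_diff(1) set_integrable_mult_right gauss_kernel_absolutely_integrable)
    show "(?h \<longlongrightarrow> 0) at_top" by real_asymp
  qed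
  moreover have "integral {0..} ?d = y * Fq (Suc 0) y - Fq (Suc (Suc 0)) y"
    unfolding Fq_Suc
    by (subst integral_diff) (auto intro: integrable_on_mult_right gauss_kernel_integrable)
  ultimately show ?thesis by (simp add: numeral_2_eq_2)
qed

lemma Fq_recurrence:
  "Fq (Suc (Suc (Suc k))) y = y * Fq (Suc (Suc k)) y + real (Suc k) * Fq (Suc k) y"
proof -
  let ?h = "\<lambda>u::real. u ^ Suc k * exp (y * u - u\<^sup>2 / 2)"
  let ?d = "\<lambda>u. real (Suc k) * gauss_kernel k y u + y * gauss_kernel (Suc k) y u
                - gauss_kernel (Suc (Suc k)) y u"
  have "integral {0..} ?d = - ?h 0"
  proof (rule integral_atLeast_0_derivative)
    show "(?h has_real_derivative ?d u) (at u)" for u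
    proof -
      have "((\<lambda>u. exp (y * u - u\<^sup>2 / 2)) has_real_derivative exp (y * u - u\<^sup>2 / 2) * (y - u)) (at u)"
        by (auto intro!: derivative_eq_intros simp: power2_eq_square algebra_simps)
      from DERIV_mult[OF DERIV_pow[of "Suc k" u] this] show ?thesis
        by (simp add: gauss_kernel_def algebra_simps)
    qed
    show "?d absolutely_integrable_on {0..}"
      by (intro set_integral_diff(1) set_integral_add(1) set_integrable_mult_right
          gauss_kernel_absolutely_integrable)
    show "(?h \<longlongrightarrow> 0) at_top" by real_asymp
  qed
  moreover have "integral {0..} ?d
      = real (Suc k) * Fq (Suc k) y + y * Fq (Suc (Suc k)) y - Fq (Suc (Suc (Suc k))) y"
    unfolding Fq_Suc
    by (subst integral_diff integral_add;
        auto intro!: integrable_add integrable_on_mult_right gauss_kernel_integrable)+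
  ultimately show ?thesis by simp
qed

lemma Fq_Suc_lower: "y * Fq (Suc k) y \<le> Fq (Suc (Suc k)) y"
proof (cases k)
  case 0
  then show ?thesis using Fq_2[of y] by (simp add: numeral_2_eq_2)
next
  case (Suc m)
  then show ?thesis using Fq_recurrence[of m y] Fq_Suc_pos[of m y] by simp
qed

lemma abs_exp_minus_one_minus_le: "\<bar>exp a - 1 - a\<bar> \<le> a\<^sup>2 / 2 * exp \<bar>a\<bar>" for a :: real
proof -
  obtain t where t: "\<bar>t\<bar> \<le> \<bar>a\<bar>" "exp a = (\<Sum>m<2. a ^ m / fact m) + exp t / fact 2 * a ^ 2"
    using Maclaurin_exp_le[of a 2] by blast
  then have "\<bar>exp a - 1 - a\<bar> = exp t / 2 * a\<^sup>2" by (simp add: numeral_2_eq_2)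
  also have "\<dots> \<le> exp \<bar>a\<bar> / 2 * a\<^sup>2" using t(1) by (intro mult_right_mono divide_right_mono) auto
  finally show ?thesis by (simp add: mult.commute)
qed

lemma Fq_Suc_has_derivative: "(Fq (Suc k) has_real_derivative Fq (Suc (Suc k)) y) (at y)"
proof -
  define D where "D h u = inverse h * (gauss_kernel k (y+h) u - gauss_kernel k y u
                                       - h * gauss_kernel (Suc k) y u)" for h u
  have D_integrable: "D h integrable_on {0..}" for h
    unfolding D_def by (intro integrable_on_mult_right integrable_diff gauss_kernel_integrable)
  have D_integral: "(Fq (Suc k) (y+h) - Fq (Suc k) y) / h - Fq (Suc (Suc k)) y = integral {0..} (D h)"
    if "h \<noteq> 0" for h
  proof -
    have "integral {0..} (\<lambda>u. (gauss_kernel k (y+h) u - gauss_kernel k y u) - h * gauss_kernel (Suc k) y u)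
        = Fq (Suc k) (y+h) - Fq (Suc k) y - h * Fq (Suc (Suc k)) y"
      unfolding Fq_Suc
      by (subst integral_diff integral_mult_right;
          auto intro!: integrable_diff integrable_on_mult_right gauss_kernel_integrable)+
    then show ?thesis using that unfolding D_def integral_mult_right by (simp add: field_simps)
  qed
  have D_bound: "\<bar>D h u\<bar> \<le> \<bar>h\<bar> / 2 * gauss_kernel (Suc (Suc k)) (y+1) u"
    if "h \<noteq> 0" "\<bar>h\<bar> \<le> 1" "u \<ge> 0" for h u
  proof -
    have "\<bar>exp (h*u) - 1 - h*u\<bar> \<le> (h*u)\<^sup>2 / 2 * exp \<bar>h*u\<bar>" by (rule abs_exp_minus_one_minus_le)
    also have "\<dots> \<le> (h*u)\<^sup>2 / 2 * exp u"
      using that by (intro mult_left_mono) (auto simp: abs_mult mult_left_le_one_le)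
    also have "\<dots> = \<bar>h\<bar> * (\<bar>h\<bar> * u\<^sup>2 / 2 * exp u)"
      by (simp add: power2_eq_square abs_mult_self_eq)
    finally have "\<bar>(exp (h*u) - 1 - h*u) / h\<bar> \<le> \<bar>h\<bar> * u\<^sup>2 / 2 * exp u"
      using that(1) by (simp add: abs_divide divide_le_eq mult.commute)
    moreover have "D h u = gauss_kernel k y u * ((exp (h*u) - 1 - h*u) / h)"
      unfolding D_def gauss_kernel_def using that(1) by (simp add: field_simps exp_add[symmetric])
    ultimately have "\<bar>D h u\<bar> \<le> gauss_kernel k y u * (\<bar>h\<bar> * u\<^sup>2 / 2 * exp u)"
      using gauss_kernel_nonneg[OF that(3)] by (simp only: abs_mult abs_of_nonneg mult_left_mono)
    also have "\<dots> = \<bar>h\<bar> / 2 * gauss_kernel (Suc (Suc k)) (y+1) u"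
      unfolding gauss_kernel_def by (simp add: field_simps power2_eq_square exp_add[symmetric])
    finally show ?thesis .
  qed
  have "((\<lambda>h. (Fq (Suc k) (y+h) - Fq (Suc k) y) / h - Fq (Suc (Suc k)) y) \<longlongrightarrow> 0) (at 0)"
  proof (rule Lim_null_comparison)
    have "\<forall>\<^sub>F h in at (0::real). h \<noteq> 0 \<and> \<bar>h\<bar> < 1"
      unfolding eventually_at by (rule exI[of _ 1]) auto
    then show "\<forall>\<^sub>F h in at 0. norm ((Fq (Suc k) (y+h) - Fq (Suc k) y) / h - Fq (Suc (Suc k)) y)
                 \<le> \<bar>h\<bar> / 2 * Fq (Suc (Suc (Suc k))) (y+1)"
    proof (rule eventually_mono)
      fix h :: real assume h: "h \<noteq> 0 \<and> \<bar>h\<bar> < 1"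
      have "norm (integral {0..} (D h))
          \<le> integral {0..} (\<lambda>u. \<bar>h\<bar> / 2 * gauss_kernel (Suc (Suc k)) (y+1) u)"
        by (rule integral_norm_bound_integral[OF D_integrable])
          (use h D_bound in \<open>auto intro: integrable_on_mult_right gauss_kernel_integrable\<close>)
      then show "norm ((Fq (Suc k) (y+h) - Fq (Suc k) y) / h - Fq (Suc (Suc k)) y)
                 \<le> \<bar>h\<bar> / 2 * Fq (Suc (Suc (Suc k))) (y+1)"
        using D_integral h by (simp add: Fq_Suc)
    qed
    show "((\<lambda>h::real. \<bar>h\<bar> / 2 * Fq (Suc (Suc (Suc k))) (y+1)) \<longlongrightarrow> 0) (at 0)"
      by (auto intro!: tendsto_eq_intros)
  qed
  then show ?thesis by (simp add: DERIV_def LIM_zero_iff)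
qed

lemma Fq_Cauchy_Schwarz: "(Fq (Suc (Suc k)) y)\<^sup>2 \<le> Fq (Suc (Suc (Suc k))) y * Fq (Suc k) y"
proof -
  define m where "m = Fq (Suc (Suc k)) y / Fq (Suc k) y"
  have pos: "Fq (Suc k) y > 0" by (rule Fq_Suc_pos)
  have square: "gauss_kernel k y u * (u - m)\<^sup>2 = gauss_kernel (Suc (Suc k)) y u
      - 2 * m * gauss_kernel (Suc k) y u + m\<^sup>2 * gauss_kernel k y u" for u
    unfolding gauss_kernel_def by (simp add: power2_eq_square algebra_simps)
  have "(\<lambda>u. gauss_kernel k y u * (u - m)\<^sup>2) integrable_on {0..}"
    unfolding square
    by (intro integrable_diff integrable_add integrable_on_mult_right gauss_kernel_integrable)
  then have "0 \<le> integral {0..} (\<lambda>u. gauss_kernel k y u * (u - m)\<^sup>2)"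
    by (rule integral_nonneg) (simp add: gauss_kernel_nonneg)
  also have "\<dots> = Fq (Suc (Suc (Suc k))) y - 2 * m * Fq (Suc (Suc k)) y + m\<^sup>2 * Fq (Suc k) y"
    unfolding square Fq_Suc
    by (subst integral_diff integral_add integral_mult_right;
        auto intro!: integrable_diff integrable_on_mult_right gauss_kernel_integrable)+
  also have "\<dots> = Fq (Suc (Suc (Suc k))) y - (Fq (Suc (Suc k)) y)\<^sup>2 / Fq (Suc k) y"
    using pos by (simp add: m_def field_simps power2_eq_square)
  finally show ?thesis using pos by (simp add: divide_le_eq)
qed

section \<open>The threshold \<open>B\<^sup>*\<close>\<close>

lemma deriv_Fq_Suc: "deriv (Fq (Suc k)) y = Fq (Suc (Suc k)) y"
  by (rule DERIV_imp_deriv[OF Fq_Suc_has_derivative])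

definition Fq_elasticity :: "nat \<Rightarrow> real \<Rightarrow> real" where
  "Fq_elasticity q B = B * deriv (Fq q) B / Fq q B"

lemma Fq_elasticity_Suc: "Fq_elasticity (Suc k) B = B * Fq (Suc (Suc k)) B / Fq (Suc k) B"
  by (simp add: Fq_elasticity_def deriv_Fq_Suc)

lemma Fq_elasticity_has_derivative:
  "(Fq_elasticity (Suc k) has_real_derivative
     ((Fq (Suc (Suc k)) B + B * Fq (Suc (Suc (Suc k))) B) * Fq (Suc k) B
       - B * (Fq (Suc (Suc k)) B)\<^sup>2) / (Fq (Suc k) B)\<^sup>2) (at B)"
proof -
  have "Fq (Suc k) B \<noteq> 0" using Fq_Suc_pos[of k B] by simp
  from DERIV_divide[OF DERIV_mult[OF DERIV_ident Fq_Suc_has_derivative[of "Suc k"]]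
      Fq_Suc_has_derivative[of k] this]
  show ?thesis unfolding Fq_elasticity_Suc[abs_def] by (simp add: power2_eq_square algebra_simps)
qed

lemma continuous_on_Fq_elasticity: "continuous_on S (Fq_elasticity (Suc k))"
  using Fq_elasticity_has_derivative DERIV_isCont continuous_at_imp_continuous_on by blast

lemma Fq_elasticity_strict_mono:
  assumes "0 \<le> a" "a < b"
  shows "Fq_elasticity (Suc k) a < Fq_elasticity (Suc k) b"
proof (rule DERIV_pos_imp_increasing[OF assms(2)])
  fix B assume "a \<le> B" "B \<le> b"
  then have "B \<ge> 0" using assms by simp
  then have "B * (Fq (Suc (Suc k)) B)\<^sup>2 \<le> B * (Fq (Suc (Suc (Suc k))) B * Fq (Suc k) B)"
    by (intro mult_left_mono Fq_Cauchy_Schwarz)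
  moreover have "0 < Fq (Suc (Suc k)) B * Fq (Suc k) B"
    using Fq_Suc_pos[of k B] Fq_Suc_pos[of "Suc k" B] by simp
  ultimately have "0 < ((Fq (Suc (Suc k)) B + B * Fq (Suc (Suc (Suc k))) B) * Fq (Suc k) B
       - B * (Fq (Suc (Suc k)) B)\<^sup>2) / (Fq (Suc k) B)\<^sup>2"
    using Fq_Suc_pos[of k B] by (simp add: algebra_simps)
  then show "\<exists>D. (Fq_elasticity (Suc k) has_real_derivative D) (at B) \<and> D > 0"
    using Fq_elasticity_has_derivative by blast
qed

lemma Fq_elasticity_eq_unique: "\<exists>!B. B > 0 \<and> Fq_elasticity (Suc k) B = real (Suc k)"
proof -
  let ?q = "real (Suc k)"
  have "sqrt ?q * (sqrt ?q * Fq (Suc k) (sqrt ?q)) \<le> sqrt ?q * Fq (Suc (Suc k)) (sqrt ?q)"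
    using Fq_Suc_lower by (rule mult_left_mono) simp
  then have "?q \<le> Fq_elasticity (Suc k) (sqrt ?q)"
    using Fq_Suc_pos[of k "sqrt ?q"]
    by (simp add: Fq_elasticity_Suc le_divide_eq mult.assoc[symmetric] del: of_nat_Suc)
  then obtain B where B: "0 \<le> B" "B \<le> sqrt ?q" "Fq_elasticity (Suc k) B = ?q"
    using IVT'[of "Fq_elasticity (Suc k)" 0 ?q "sqrt ?q"] continuous_on_Fq_elasticity
    by (auto simp: Fq_elasticity_Suc)
  then have "B > 0" by (cases "B = 0") (auto simp: Fq_elasticity_Suc)
  then show ?thesis
    using B(3) Fq_elasticity_strict_mono[of B _ k] Fq_elasticity_strict_mono[of _ B k]
    by (intro ex1I[of _ B]) (auto, metis less_le_not_le linorder_neqE_linordered_idom less_imp_le)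
qed

lemma Fq_elasticity_root_lower:
  assumes "B > 0" "Fq_elasticity (Suc k) B = real (Suc k)"
  shows "real (Suc k) \<le> 2 * B\<^sup>2"
proof -
  let ?q = "real (Suc k)"
  define a where "a = Fq (Suc k) B"
  define b where "b = Fq (Suc (Suc k)) B"
  have a: "a > 0" unfolding a_def by (rule Fq_Suc_pos)
  have Bb: "B * b = ?q * a"
    using assms(2) a by (simp add: Fq_elasticity_Suc a_def b_def divide_eq_eq del: of_nat_Suc)
  have "Fq (Suc (Suc (Suc k))) B = 2 * ?q * a"
    using Fq_recurrence[of k B] Bb by (simp add: a_def b_def)
  then have "b\<^sup>2 \<le> 2 * ?q * a * a"
    using Fq_Cauchy_Schwarz[of k B] by (simp add: a_def b_def)
  then have "(B * b)\<^sup>2 \<le> B\<^sup>2 * (2 * ?q * a * a)"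
    by (simp add: power_mult_distrib mult_left_mono)
  then have "?q * (?q * a\<^sup>2) \<le> ?q * (2 * B\<^sup>2 * a\<^sup>2)"
    unfolding Bb by (simp add: power2_eq_square algebra_simps)
  then have "?q * a\<^sup>2 \<le> 2 * B\<^sup>2 * a\<^sup>2" by (rule mult_left_le_imp_le) simp
  then show ?thesis using a by simp
qed

lemma Bstar_spec: "Bstar n > 0" "Fq_elasticity (Suc (2*n)) (Bstar n) = real (Suc (2*n))"
proof -
  have "Bstar n = (THE B. B > 0 \<and> Fq_elasticity (Suc (2*n)) B = real (Suc (2*n)))"
    unfolding Bstar_def Fq_elasticity_def by (simp add: eq_commute[of _ "_ / _"])
  with theI'[OF Fq_elasticity_eq_unique[of "2*n"]]
  show "Bstar n > 0" "Fq_elasticity (Suc (2*n)) (Bstar n) = real (Suc (2*n))" by auto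
qed

lemma Bstar_squared_ge: "real n \<le> (Bstar n)\<^sup>2"
  using Fq_elasticity_root_lower[OF Bstar_spec(1)[of n] Bstar_spec(2)[of n]] by simp

section \<open>The operator \<open>\<L>\<close> on self-similar functions\<close>

definition profile_ode ::
    "real \<Rightarrow> (real \<Rightarrow> real) \<Rightarrow> (real \<Rightarrow> real) \<Rightarrow> (real \<Rightarrow> real) \<Rightarrow> bool" where
  "profile_ode q \<Phi> \<Phi>' \<Phi>'' \<longleftrightarrow> (\<forall>z. (\<Phi> has_real_derivative \<Phi>' z) (at z)
      \<and> (\<Phi>' has_real_derivative \<Phi>'' z) (at z) \<and> \<Phi>'' z = z * \<Phi>' z + q * \<Phi> z)"

lemma profile_ode_Fq:
  "profile_ode (real (Suc k)) (Fq (Suc k)) (Fq (Suc (Suc k))) (Fq (Suc (Suc (Suc k))))"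
  unfolding profile_ode_def using Fq_Suc_has_derivative Fq_recurrence by blast

lemma profile_ode_scale_unit:
  assumes "profile_ode q \<Phi> \<Phi>' \<Phi>''" and "\<sigma>\<^sup>2 = 1"
  shows "profile_ode q (\<lambda>z. \<Phi> (\<sigma> * z)) (\<lambda>z. \<sigma> * \<Phi>' (\<sigma> * z)) (\<lambda>z. \<Phi>'' (\<sigma> * z))"
  unfolding profile_ode_def
proof (intro allI conjI)
  fix z :: real
  have d: "(\<Phi> has_real_derivative \<Phi>' (\<sigma> * z)) (at (\<sigma> * z))"
      "(\<Phi>' has_real_derivative \<Phi>'' (\<sigma> * z)) (at (\<sigma> * z))"
    and ode: "\<Phi>'' (\<sigma> * z) = \<sigma> * z * \<Phi>' (\<sigma> * z) + q * \<Phi> (\<sigma> * z)"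
    using assms(1) unfolding profile_ode_def by blast+
  have lin: "((\<lambda>z. \<sigma> * z) has_real_derivative \<sigma>) (at z)"
    using DERIV_cmult[OF DERIV_ident] by simp
  show "((\<lambda>z. \<Phi> (\<sigma> * z)) has_real_derivative \<sigma> * \<Phi>' (\<sigma> * z)) (at z)"
    using DERIV_chain2[OF d(1) lin] by (simp add: mult.commute)
  show "((\<lambda>z. \<sigma> * \<Phi>' (\<sigma> * z)) has_real_derivative \<Phi>'' (\<sigma> * z)) (at z)"
    using DERIV_cmult[OF DERIV_chain2[OF d(2) lin], of \<sigma>] assms(2)
    by (simp only: mult.commute[of _ \<sigma>] mult.assoc[symmetric] power2_eq_square[symmetric] mult_1)
  show "\<Phi>'' (\<sigma> * z) = z * (\<sigma> * \<Phi>' (\<sigma> * z)) + q * \<Phi> (\<sigma> * z)"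
    using ode by (simp add: algebra_simps)
qed

lemma profile_ode_add:
  assumes "profile_ode q \<Phi> \<Phi>' \<Phi>''" "profile_ode q \<Psi> \<Psi>' \<Psi>''"
  shows "profile_ode q (\<lambda>z. \<Phi> z + \<Psi> z) (\<lambda>z. \<Phi>' z + \<Psi>' z) (\<lambda>z. \<Phi>'' z + \<Psi>'' z)"
  using assms unfolding profile_ode_def
proof (intro allI conjI)
  fix z
  show "((\<lambda>z. \<Phi> z + \<Psi> z) has_real_derivative \<Phi>' z + \<Psi>' z) (at z)"
    "((\<lambda>z. \<Phi>' z + \<Psi>' z) has_real_derivative \<Phi>'' z + \<Psi>'' z) (at z)"
    using assms unfolding profile_ode_def by (blast intro: DERIV_add)+
  show "\<Phi>'' z + \<Psi>'' z = z * (\<Phi>' z + \<Psi>' z) + q * (\<Phi> z + \<Psi> z)"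
    using assms unfolding profile_ode_def by (simp add: algebra_simps)
qed

lemma profile_ode_cmult:
  assumes "profile_ode q \<Phi> \<Phi>' \<Phi>''"
  shows "profile_ode q (\<lambda>z. c * \<Phi> z) (\<lambda>z. c * \<Phi>' z) (\<lambda>z. c * \<Phi>'' z)"
  unfolding profile_ode_def
proof (intro allI conjI)
  fix z
  show "((\<lambda>z. c * \<Phi> z) has_real_derivative c * \<Phi>' z) (at z)"
    "((\<lambda>z. c * \<Phi>' z) has_real_derivative c * \<Phi>'' z) (at z)"
    using assms unfolding profile_ode_def by (blast intro: DERIV_cmult)+
  show "c * \<Phi>'' z = z * (c * \<Phi>' z) + q * (c * \<Phi> z)"
    using assms unfolding profile_ode_def by (simp add: algebra_simps)
qed

text \<open>\<open>sqrt (1 - s) ^ (2n+1)\<close> stands for \<open>(1 - s)\<^bsup>n+1/2\<^esup>\<close>; the two agree for \<open>s < 1\<close>,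
  the only times where \<open>\<L>\<close> is evaluated.  In \<open>Lop_scaled_profile\<close> the truncated exponent
  \<open>2n - 1\<close> is harmless for \<open>n = 0\<close> because its coefficient is \<open>n\<close>.\<close>

definition scaled_profile :: "nat \<Rightarrow> (real \<Rightarrow> real) \<Rightarrow> real \<Rightarrow> real \<Rightarrow> real \<Rightarrow> real" where
  "scaled_profile n \<Phi> \<kappa> s y = sqrt (1 - s) ^ (2*n+1) * \<Phi> (y / sqrt (1 - s)) + \<kappa> * y ^ (2*n+1)"

lemma Lop_scaled_profile:
  assumes ode: "profile_ode (real (Suc (2*n))) \<Phi> \<Phi>' \<Phi>''" and t: "t < 1"
  shows "Lop (scaled_profile n \<Phi> \<kappa>) t x
       = \<kappa> * real (2*n+1) * (real n * x ^ (2*n-1) - x ^ (2*n+1) / (1 - t))"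
proof -
  define q where "q = 2*n+1"
  define r where "r = sqrt (1 - t)"
  have r: "r > 0" "r\<^sup>2 = 1 - t" using t by (simp_all add: r_def)
  have d1: "(\<Phi> has_real_derivative \<Phi>' z) (at z)" and d2: "(\<Phi>' has_real_derivative \<Phi>'' z) (at z)"
    for z using ode unfolding profile_ode_def by blast+
  have \<Phi>'': "\<Phi>'' z = z * \<Phi>' z + real q * \<Phi> z" for z
    using ode unfolding profile_ode_def q_def by simp
  have d1_chain: "((\<lambda>y. \<Phi> (g y)) has_real_derivative \<Phi>' (g y) * D) (at y)"
    and d2_chain: "((\<lambda>y. \<Phi>' (g y)) has_real_derivative \<Phi>'' (g y) * D) (at y)"
    if "(g has_real_derivative D) (at y)" for g D y
    using DERIV_chain2[OF d1 that] DERIV_chain2[OF d2 that] by blast+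
  define r' where "r' = - inverse r / 2"
  have dt: "((\<lambda>s. scaled_profile n \<Phi> \<kappa> s x) has_real_derivative
        real q * r' * r ^ (q - 1) * \<Phi> (x / r) + \<Phi>' (x / r) * (- x * r' / r\<^sup>2) * r ^ q) (at t)"
    unfolding scaled_profile_def q_def[symmetric] r'_def r_def
    using t by (auto intro!: derivative_eq_intros d1_chain simp: field_simps)
  have dx: "((\<lambda>y. scaled_profile n \<Phi> \<kappa> t y) has_real_derivative
        r ^ q * \<Phi>' (y / r) / r + \<kappa> * real q * y ^ (q - 1)) (at y)" for y
    unfolding scaled_profile_def q_def[symmetric] r_def[symmetric]
    using r(1) by (auto intro!: derivative_eq_intros d1_chain simp: algebra_simps)
  then have "deriv (\<lambda>y. scaled_profile n \<Phi> \<kappa> t y) = (\<lambda>y. r ^ q * \<Phi>' (y / r) / r + \<kappa> * real q * y ^ (q - 1))"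
    by (intro ext DERIV_imp_deriv)
  moreover have "((\<lambda>y. r ^ q * \<Phi>' (y / r) / r + \<kappa> * real q * y ^ (q - 1)) has_real_derivative
        r ^ q * \<Phi>'' (x / r) / r\<^sup>2 + \<kappa> * real q * real (q - 1) * x ^ (q - 2)) (at x)"
    using r(1) by (auto intro!: derivative_eq_intros d2_chain simp: power2_eq_square numeral_2_eq_2 algebra_simps)
  ultimately have "Lop (scaled_profile n \<Phi> \<kappa>) t x
      = real q * r' * r ^ (q - 1) * \<Phi> (x / r) + \<Phi>' (x / r) * (- x * r' / r\<^sup>2) * r ^ q
        - x / (1 - t) * (r ^ q * \<Phi>' (x / r) / r + \<kappa> * real q * x ^ (q - 1))
        + 1/2 * (r ^ q * \<Phi>'' (x / r) / r\<^sup>2 + \<kappa> * real q * real (q - 1) * x ^ (q - 2))"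
    unfolding Lop_def using DERIV_imp_deriv[OF dt] DERIV_imp_deriv by auto
  also have "\<dots> = \<kappa> * real q * (real n * x ^ (2*n-1) - x ^ (2*n+1) / (1 - t))"
  proof -
    have "r ^ q = r ^ (2*n) * r" "r ^ (q - 1) = r ^ (2*n)" "q - 2 = 2*n - 1"
      "x ^ (q - 1) = x ^ (2*n)" "x ^ (2*n+1) = x * x ^ (2*n)" "real (q - 1) = 2 * real n"
      by (simp_all add: q_def)
    then show ?thesis
      unfolding \<Phi>'' r'_def r(2)[symmetric] using r(1) by (simp add: field_simps power2_eq_square)
  qed
  finally show ?thesis by (simp add: q_def)
qed

lemma Lop_cong_open:
  assumes S: "open S" "(t, x) \<in> S" and eq: "\<And>s y. (s, y) \<in> S \<Longrightarrow> \<xi> s y = \<eta> s y"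
  shows "Lop \<xi> t x = Lop \<eta> t x"
proof -
  have "open ((\<lambda>s. (s, x)) -` S)" "open (Pair t -` S)"
    by (intro continuous_open_vimage[OF S(1)] continuous_intros)+
  from eventually_nhds_in_open[OF this(1)] eventually_nhds_in_open[OF this(2)]
  have "\<forall>\<^sub>F s in nhds t. (s, x) \<in> S" "\<forall>\<^sub>F y in nhds x. (t, y) \<in> S"
    using S(2) by auto
  then have ev: "\<forall>\<^sub>F s in nhds t. \<xi> s x = \<eta> s x" "\<forall>\<^sub>F y in nhds x. \<xi> t y = \<eta> t y"
    by (auto elim: eventually_mono intro: eq)
  have "deriv (\<lambda>s. \<xi> s x) t = deriv (\<lambda>s. \<eta> s x) t"
    "deriv (\<lambda>y. \<xi> t y) x = deriv (\<lambda>y. \<eta> t y) x"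
    using ev by (auto intro: deriv_cong_ev)
  moreover have "deriv (deriv (\<lambda>y. \<xi> t y)) x = deriv (deriv (\<lambda>y. \<eta> t y)) x"
    using higher_deriv_cong_ev[OF ev(2) refl, of 2] by (simp add: numeral_2_eq_2)
  ultimately show ?thesis by (simp add: Lop_def)
qed

section \<open>The function \<open>J\<^sup>*\<close>\<close>

lemma powr_n_half_eq_sqrt_power:
  assumes "u > 0"
  shows "u powr (real n + 1/2) = sqrt u ^ (2*n+1)"
proof -
  have "u powr (real n + 1/2) = u ^ n * sqrt u"
    using assms by (simp add: powr_add powr_realpow powr_half_sqrt)
  also have "\<dots> = sqrt u ^ (2*n+1)"
    using assms by (simp add: power_mult real_sqrt_pow2)
  finally show ?thesis .
qed

lemma Jstar_eq_inner:
  assumes "s < 1" "\<bar>y\<bar> < Bstar n * sqrt (1 - s)"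
  shows "Jstar n s y = scaled_profile n
      (\<lambda>z. jfun n (Bstar n) * (Fq (Suc (2*n)) z + Fq (Suc (2*n)) (- z))) 0 s y"
  using assms by (simp add: Jstar_def Gq_def scaled_profile_def powr_n_half_eq_sqrt_power)

lemma Jstar_eq_outer:
  assumes \<sigma>: "\<sigma> = 1 \<or> \<sigma> = -1" and s: "s < 1" and y: "Bstar n * sqrt (1 - s) < \<sigma> * y"
  shows "Jstar n s y = scaled_profile n
      (\<lambda>z. Bstar n ^ (2*n+1) / Fq (Suc (2*n)) (Bstar n) * Fq (Suc (2*n)) (- \<sigma> * z)) \<sigma> s y"
proof -
  have "0 \<le> Bstar n * sqrt (1 - s)" using Bstar_spec(1)[of n] s by simp
  then have "\<not> \<bar>y\<bar> < Bstar n * sqrt (1 - s)" "- \<sigma> * y < Bstar n * sqrt (1 - s)"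
    using \<sigma> y by auto
  moreover have "y \<le> 0 \<longleftrightarrow> \<sigma> = -1"
    using \<sigma> y \<open>0 \<le> Bstar n * sqrt (1 - s)\<close> by auto
  ultimately show ?thesis
    using \<sigma> s by (auto simp: Jstar_def gfun_def Ufun_def scaled_profile_def powr_n_half_eq_sqrt_power)
qed

lemma sgn_mult_Lop_power_term_nonpos:
  fixes t x :: real
  assumes t: "t < 1" and x: "real n * (1 - t) \<le> x\<^sup>2"
  shows "sgn x * real (2*n+1) * (real n * x ^ (2*n-1) - x ^ (2*n+1) / (1 - t)) \<le> 0"
proof (cases n)
  case 0
  have "sgn x * x = \<bar>x\<bar>" by (simp add: abs_sgn mult.commute)
  then show ?thesis using 0 t by (simp add: mult.assoc[symmetric])
next
  case (Suc m)
  have "sgn x * x ^ (2*n-1) = \<bar>x\<bar> ^ (2*m) * (sgn x * x)"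
    by (simp add: Suc power_even_abs)
  also have "sgn x * x = \<bar>x\<bar>" by (simp add: abs_sgn mult.commute)
  finally have nonneg: "sgn x * x ^ (2*n-1) \<ge> 0" by simp
  have "x ^ (2*n+1) = x ^ (2*n-1) * x\<^sup>2" by (simp add: Suc power2_eq_square)
  then have eq: "sgn x * real (2*n+1) * (real n * x ^ (2*n-1) - x ^ (2*n+1) / (1 - t))
      = real (2*n+1) * (sgn x * x ^ (2*n-1)) * (real n - x\<^sup>2 / (1 - t))"
    by (simp add: algebra_simps add_divide_distrib)
  have "real n - x\<^sup>2 / (1 - t) \<le> 0" using x t by (simp add: field_simps)
  then show ?thesis unfolding eq by (intro mult_nonneg_nonpos mult_nonneg_nonneg nonneg) auto
qed

lemma Lop_Jstar_continuation_region:
  assumes "t < 1" "\<bar>x\<bar> < Bstar n * sqrt (1 - t)"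
  shows "Lop (Jstar n) t x = 0"
proof -
  let ?F = "Fq (Suc (2*n))" and ?B = "Bstar n"
  have "(-1 :: real)\<^sup>2 = 1" by simp
  note ode_reflect = profile_ode_scale_unit[OF profile_ode_Fq this, simplified mult_minus1]
  let ?S = "{p. fst p < 1} \<inter> {p. \<bar>snd p\<bar> < ?B * sqrt (1 - fst p)}"
  have "Lop (Jstar n) t x = Lop (scaled_profile n (\<lambda>z. jfun n ?B * (?F z + ?F (- z))) 0) t x"
    by (rule Lop_cong_open[of ?S])
      (use assms Jstar_eq_inner in \<open>auto intro!: open_Int open_Collect_less continuous_intros\<close>)
  also have "\<dots> = 0"
    using assms(1) Lop_scaled_profile[OF profile_ode_cmult[OF profile_ode_add[OF profile_ode_Fq ode_reflect]]]
    by simp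
  finally show ?thesis .
qed

lemma Lop_Jstar_stopping_region:
  assumes t: "t < 1" and x: "\<bar>x\<bar> > Bstar n * sqrt (1 - t)"
  shows "Lop (Jstar n) t x \<le> 0"
proof -
  let ?F = "Fq (Suc (2*n))" and ?B = "Bstar n"
  define \<sigma> where "\<sigma> = sgn x"
  have B_sqrt: "0 \<le> ?B * sqrt (1 - t)" using t Bstar_spec(1)[of n] by simp
  then have \<sigma>: "\<sigma> = 1 \<or> \<sigma> = -1" "?B * sqrt (1 - t) < \<sigma> * x"
    using x by (auto simp: \<sigma>_def sgn_if)
  let ?S = "{p. fst p < 1} \<inter> {p. ?B * sqrt (1 - fst p) < \<sigma> * snd p}"
  let ?c = "?B ^ (2*n+1) / ?F ?B"
  have "Lop (Jstar n) t x = Lop (scaled_profile n (\<lambda>z. ?c * ?F (- \<sigma> * z)) \<sigma>) t x"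
    by (rule Lop_cong_open[of ?S])
      (use t \<sigma> Jstar_eq_outer[OF \<sigma>(1)] in \<open>auto intro!: open_Int open_Collect_less continuous_intros\<close>)
  also have "\<dots> = \<sigma> * real (2*n+1) * (real n * x ^ (2*n-1) - x ^ (2*n+1) / (1 - t))"
    using t \<sigma>(1)
    by (subst Lop_scaled_profile[OF profile_ode_cmult[OF profile_ode_scale_unit[OF profile_ode_Fq, of "- \<sigma>"]]])
      auto
  also have "\<dots> \<le> 0"
  proof (rule sgn_mult_Lop_power_term_nonpos[OF t, where x=x, folded \<sigma>_def])
    have "real n * (1 - t) \<le> ?B\<^sup>2 * (1 - t)"
      using t Bstar_squared_ge[of n] by (intro mult_right_mono) auto
    also have "\<dots> = (?B * sqrt (1 - t))\<^sup>2"
      using t by (simp add: power_mult_distrib)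
    also have "\<dots> \<le> x\<^sup>2"
      using x B_sqrt by (intro abs_le_square_iff[THEN iffD1]) auto
    finally show "real n * (1 - t) \<le> x\<^sup>2" .
  qed
  finally show ?thesis .
qed

theorem lemma4p6:
  fixes n :: nat
  shows "(\<forall>t x. 0 \<le> t \<and> t < 1 \<and> \<bar>x\<bar> < Bstar n * sqrt (1 - t)
            \<longrightarrow> Lop (Jstar n) t x = 0)
       \<and> (\<forall>t x. 0 \<le> t \<and> t < 1 \<and> \<bar>x\<bar> > Bstar n * sqrt (1 - t)
            \<longrightarrow> Lop (Jstar n) t x \<le> 0)"
  using Lop_Jstar_continuation_region Lop_Jstar_stopping_region by blast

end
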